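(* Suppose $X$ is a Fr\'echet $L$-selective space in which every countable subspace is first countable. Then $X$ is strongly $L$-selective.
   Context: All spaces are assumed $T_1$. For spaces $Y$, $X$, a map $\varphi:Y\to\mathcal P(X)\setminus\{\emptyset\}$ is lower semicontinuous (l.s.c.) if $\{y:\varphi(y)\cap U\neq\emptyset\}$ is open in $Y$ for every open $U\subseteq X$; a selection is a map $f:Y\to X$ with $f(y)\in\varphi(y)$ for all $y$. $X$ is strongly $Y$-selective if every l.s.c. map $Y\to\mathcal P(X)\setminus\{\emptyset\}$ has a continuous selection, and $Y$-selective if every l.s.c. map from $Y$ to the nonempty closed subsets of $X$ has a continuous selection. (Strongly) $L$-selective means (strongly) $(\omega+1)$-selective, with $\omega+1$ carrying the order topology. Fr\'echet means: whenever $x\in\overline A$ there is a sequence in $A$ converging to $x$. *)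

theory Defs
  imports "HOL-Analysis.Analysis" "HOL-Library.Extended_Nat"
begin

definition lsc_map :: "'b topology \<Rightarrow> 'a topology \<Rightarrow> ('b \<Rightarrow> 'a set) \<Rightarrow> bool" where
  "lsc_map Y X \<phi> \<longleftrightarrow>
     (\<forall>y \<in> topspace Y. \<phi> y \<subseteq> topspace X \<and> \<phi> y \<noteq> {}) \<and>
     (\<forall>U. openin X U \<longrightarrow> openin Y {y \<in> topspace Y. \<phi> y \<inter> U \<noteq> {}})"

definition is_selection :: "'b topology \<Rightarrow> ('b \<Rightarrow> 'a set) \<Rightarrow> ('b \<Rightarrow> 'a) \<Rightarrow> bool" where
  "is_selection Y \<phi> f \<longleftrightarrow> (\<forall>y \<in> topspace Y. f y \<in> \<phi> y)"

definition strongly_selective :: "'b topology \<Rightarrow> 'a topology \<Rightarrow> bool" where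
  "strongly_selective Y X \<longleftrightarrow>
     (\<forall>\<phi>. lsc_map Y X \<phi> \<longrightarrow> (\<exists>f. continuous_map Y X f \<and> is_selection Y \<phi> f))"

definition selective :: "'b topology \<Rightarrow> 'a topology \<Rightarrow> bool" where
  "selective Y X \<longleftrightarrow>
     (\<forall>\<phi>. lsc_map Y X \<phi> \<and> (\<forall>y \<in> topspace Y. closedin X (\<phi> y))
          \<longrightarrow> (\<exists>f. continuous_map Y X f \<and> is_selection Y \<phi> f))"

text \<open>omega+1 with the order topology: the type enat with its (order) topology.\<close>
definition omega_plus_one :: "enat topology" where
  "omega_plus_one = euclidean"

definition L_selective :: "'a topology \<Rightarrow> bool" where
  "L_selective X \<longleftrightarrow> selective omega_plus_one X"

definition strongly_L_selective :: "'a topology \<Rightarrow> bool" where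
  "strongly_L_selective X \<longleftrightarrow> strongly_selective omega_plus_one X"

definition frechet_space :: "'a topology \<Rightarrow> bool" where
  "frechet_space X \<longleftrightarrow>
     (\<forall>A x. A \<subseteq> topspace X \<and> x \<in> X closure_of A \<longrightarrow>
        (\<exists>\<sigma>::nat \<Rightarrow> 'a. range \<sigma> \<subseteq> A \<and> limitin X \<sigma> x sequentially))"

end

theory Submission
  imports Defs
begin

(* Let phi be lower semicontinuous on omega+1 and p \<in> phi(omega). Replacing phi(n) by its closure
   and phi(omega) by {p} keeps the map lower semicontinuous and makes it closed-valued (X is T1),
   so L-selectivity yields y_n \<in> cl phi(n) with y_n \<longrightarrow> p. By the Frechet property each y_n is the
   limit of a sequence in phi(n); these countably many points together with p form a first
   countable subspace, and a diagonal choice against a countable base at p in it gives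
   x_n \<in> phi(n) with x_n \<longrightarrow> p. Sending n to x_n and omega to p is then a continuous selection. *)

lemma openin_omega_plus_one:
  "openin omega_plus_one A \<longleftrightarrow> (\<infinity> \<in> A \<longrightarrow> (\<forall>\<^sub>F n in sequentially. enat n \<in> A))"
proof -
  have "(\<exists>n::nat. {enat n <..} \<subseteq> A) \<longleftrightarrow> (\<forall>\<^sub>F n in sequentially. enat n \<in> A)"
    if "\<infinity> \<in> A"
  proof
    assume "\<exists>n::nat. {enat n <..} \<subseteq> A"
    then show "\<forall>\<^sub>F n in sequentially. enat n \<in> A"
      unfolding eventually_sequentially by (metis Suc_le_eq enat_ord_simps(2) greaterThan_iff subsetD)
  next
    assume "\<forall>\<^sub>F n in sequentially. enat n \<in> A"
    then obtain N where N: "\<And>n. n \<ge> N \<Longrightarrow> enat n \<in> A"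
      unfolding eventually_sequentially by blast
    have "{enat N <..} \<subseteq> A"
    proof
      fix e assume "e \<in> {enat N <..}"
      then show "e \<in> A" using N \<open>\<infinity> \<in> A\<close> by (cases e) auto
    qed
    then show "\<exists>n::nat. {enat n <..} \<subseteq> A" by blast
  qed
  then show ?thesis
    by (auto simp: omega_plus_one_def open_enat_iff)
qed

lemma topspace_omega_plus_one [simp]: "topspace omega_plus_one = UNIV"
  by (simp add: omega_plus_one_def)

lemma continuous_map_omega_plus_one:
  "continuous_map omega_plus_one X f \<longleftrightarrow>
     range f \<subseteq> topspace X \<and> limitin X (\<lambda>n. f (enat n)) (f \<infinity>) sequentially"
  by (auto simp: continuous_map_def limitin_def openin_omega_plus_one)

lemma lsc_map_omega_plus_one:
  "lsc_map omega_plus_one X \<phi> \<longleftrightarrow>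
     (\<forall>e. \<phi> e \<subseteq> topspace X \<and> \<phi> e \<noteq> {}) \<and>
     (\<forall>U. openin X U \<and> \<phi> \<infinity> \<inter> U \<noteq> {} \<longrightarrow> (\<forall>\<^sub>F n in sequentially. \<phi> (enat n) \<inter> U \<noteq> {}))"
  by (auto simp: lsc_map_def openin_omega_plus_one)

lemma L_selective_limit_in_closures:
  assumes "t1_space X" "L_selective X" "lsc_map omega_plus_one X \<phi>" "p \<in> \<phi> \<infinity>"
  obtains y where "\<And>n. y n \<in> X closure_of \<phi> (enat n)" "limitin X y p sequentially"
proof -
  have \<phi>_values: "\<And>e. \<phi> e \<subseteq> topspace X \<and> \<phi> e \<noteq> {}"
    and \<phi>_lsc: "\<And>U. openin X U \<Longrightarrow> \<phi> \<infinity> \<inter> U \<noteq> {} \<Longrightarrow> \<forall>\<^sub>F n in sequentially. \<phi> (enat n) \<inter> U \<noteq> {}"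
    using assms(3) by (auto simp: lsc_map_omega_plus_one)
  have \<phi>_closure: "\<phi> e \<subseteq> X closure_of \<phi> e" for e
    using \<phi>_values by (simp add: closure_of_subset)
  have p: "p \<in> topspace X"
    using assms(4) \<phi>_values by blast
  define \<psi> where "\<psi> e = (case e of enat n \<Rightarrow> X closure_of \<phi> (enat n) | \<infinity> \<Rightarrow> {p})" for e
  have "lsc_map omega_plus_one X \<psi>"
    unfolding lsc_map_omega_plus_one
  proof (intro conjI allI impI)
    fix e
    show "\<psi> e \<subseteq> topspace X" "\<psi> e \<noteq> {}"
      using p \<phi>_values
      by (cases e; auto simp: \<psi>_def closure_of_subset_topspace closure_of_eq_empty)+
  next
    fix U assume "openin X U \<and> \<psi> \<infinity> \<inter> U \<noteq> {}"
    then have "\<forall>\<^sub>F n in sequentially. \<phi> (enat n) \<inter> U \<noteq> {}"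
      using \<phi>_lsc assms(4) by (auto simp: \<psi>_def)
    then show "\<forall>\<^sub>F n in sequentially. \<psi> (enat n) \<inter> U \<noteq> {}"
      by (rule eventually_mono) (use \<phi>_closure in \<open>auto simp: \<psi>_def\<close>)
  qed
  moreover have "closedin X (\<psi> e)" for e
    using assms(1) p by (cases e) (auto simp: \<psi>_def t1_space_closedin_singleton)
  ultimately obtain g where g: "continuous_map omega_plus_one X g" "is_selection omega_plus_one \<psi> g"
    using assms(2) by (auto simp: L_selective_def selective_def)
  then have "g \<infinity> = p" "\<And>n. g (enat n) \<in> X closure_of \<phi> (enat n)"
    by (auto simp: is_selection_def \<psi>_def split: enat.splits)
  with g(1) show thesis
    using that[of "\<lambda>n. g (enat n)"] by (simp add: continuous_map_omega_plus_one)
qed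

lemma first_countable_subtopology_nat_base:
  assumes "first_countable (subtopology X S)" "p \<in> S" "S \<subseteq> topspace X"
  obtains V :: "nat \<Rightarrow> 'a set"
  where "\<And>m. openin X (V m)" "\<And>m. p \<in> V m"
    and "\<And>U. openin X U \<Longrightarrow> p \<in> U \<Longrightarrow> \<exists>m. S \<inter> V m \<subseteq> U"
proof -
  have p: "p \<in> topspace (subtopology X S)"
    using assms by auto
  then obtain \<B> where "countable \<B>" and \<B>_open: "\<And>W. W \<in> \<B> \<Longrightarrow> openin (subtopology X S) W"
    and \<B>_base: "\<And>U. openin (subtopology X S) U \<Longrightarrow> p \<in> U \<Longrightarrow> \<exists>W \<in> \<B>. p \<in> W \<and> W \<subseteq> U"
    using assms(1) unfolding first_countable_def by metis
  define \<B>p where "\<B>p = {W \<in> \<B>. p \<in> W}"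
  have "\<B>p \<noteq> {}"
    using \<B>_base[OF openin_topspace p] unfolding \<B>p_def by blast
  moreover have "countable \<B>p"
    using \<open>countable \<B>\<close> by (simp add: \<B>p_def)
  ultimately have \<B>p_range: "\<B>p = range (from_nat_into \<B>p)"
    by (simp add: range_from_nat_into)
  have "\<exists>T. openin X T \<and> from_nat_into \<B>p m = S \<inter> T \<and> p \<in> T" for m
  proof -
    have "from_nat_into \<B>p m \<in> \<B>p"
      by (rule from_nat_into[OF \<open>\<B>p \<noteq> {}\<close>])
    then have "openin (subtopology X S) (from_nat_into \<B>p m)" "p \<in> from_nat_into \<B>p m"
      unfolding \<B>p_def using \<B>_open by auto
    then show ?thesis
      unfolding openin_subtopology by blast
  qed
  then obtain V where V: "\<And>m. openin X (V m)" "\<And>m. from_nat_into \<B>p m = S \<inter> V m" "\<And>m. p \<in> V m"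
    by metis
  show thesis
  proof (rule that[OF V(1,3)])
    fix U assume "openin X U" "p \<in> U"
    then have "openin (subtopology X S) (S \<inter> U)" "p \<in> S \<inter> U"
      using assms(2) by (auto simp: openin_subtopology_Int2)
    then obtain W where "W \<in> \<B>p" "W \<subseteq> U"
      using \<B>_base unfolding \<B>p_def by blast
    then obtain m where "W = S \<inter> V m"
      using \<B>p_range V(2) by (metis imageE)
    with \<open>W \<subseteq> U\<close> show "\<exists>m. S \<inter> V m \<subseteq> U" by blast
  qed
qed

lemma limitin_diagonal_sequence:
  fixes V :: "nat \<Rightarrow> 'a set"
  assumes V: "\<And>m. openin X (V m)" "\<And>m. p \<in> V m"
    and V_base: "\<And>U. openin X U \<Longrightarrow> p \<in> U \<Longrightarrow> \<exists>m. S \<inter> V m \<subseteq> U"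
    and y: "limitin X y p sequentially"
    and z: "\<And>n. limitin X (z n) (y n) sequentially" "\<And>n k. z n k \<in> S"
  obtains k where "limitin X (\<lambda>n. z n (k n)) p sequentially"
proof -
  \<comment> \<open>\<open>D n\<close> is a neighbourhood of \<open>y n\<close>, yet eventually lies inside any fixed \<open>V m\<close>,
      because \<open>y n\<close> eventually enters \<open>V m\<close>.\<close>
  define D where "D n = topspace X \<inter> \<Inter>(V ` {m. m \<le> n \<and> y n \<in> V m})" for n
  have "\<exists>k. z n k \<in> D n" for n
  proof -
    have "openin X (D n)"
      unfolding D_def by (rule openin_Int_Inter) (auto intro: V)
    moreover have "y n \<in> D n"
      using limitin_topspace[OF z(1)] by (auto simp: D_def)
    ultimately have "\<forall>\<^sub>F k in sequentially. z n k \<in> D n"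
      using z(1) unfolding limitin_def by blast
    then show ?thesis
      by (meson eventually_sequentially order_refl)
  qed
  then obtain k where k: "\<And>n. z n (k n) \<in> D n"
    by metis
  have "limitin X (\<lambda>n. z n (k n)) p sequentially"
    unfolding limitin_sequentially
  proof (intro conjI allI impI)
    show "p \<in> topspace X"
      using y by (rule limitin_topspace)
  next
    fix U assume "openin X U \<and> p \<in> U"
    then obtain m where m: "S \<inter> V m \<subseteq> U"
      using V_base by blast
    obtain N where N: "\<And>n. N \<le> n \<Longrightarrow> y n \<in> V m"
      using y V(1,2) unfolding limitin_sequentially by meson
    have "z n (k n) \<in> U" if "max N m \<le> n" for n
      using k[of n] N[of n] that z(2)[of n "k n"] m by (auto simp: D_def)
    then show "\<exists>N. \<forall>n. N \<le> n \<longrightarrow> z n (k n) \<in> U"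
      by blast
  qed
  then show thesis
    by (rule that)
qed

lemma frechet_limitin_from_closure_points:
  assumes "frechet_space X"
    and "\<forall>S. S \<subseteq> topspace X \<and> countable S \<longrightarrow> first_countable (subtopology X S)"
    and y: "limitin X y p sequentially" "\<And>n. y n \<in> X closure_of A n"
    and A: "\<And>n. A n \<subseteq> topspace X"
  obtains x where "\<And>n. x n \<in> A n" "limitin X x p sequentially"
proof -
  have "\<forall>n. \<exists>\<sigma>. range \<sigma> \<subseteq> A n \<and> limitin X \<sigma> (y n) sequentially"
    using assms(1) y(2) A unfolding frechet_space_def by blast
  then obtain z where z_range: "\<And>n. range (z n) \<subseteq> A n"
    and z_lim: "\<And>n. limitin X (z n) (y n) sequentially"
    by metis
  define S where "S = insert p (\<Union>n. range (z n))"
  have "S \<subseteq> topspace X"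
    using limitin_topspace[OF y(1)] z_range A by (auto simp: S_def)
  moreover have "countable S"
    by (simp add: S_def)
  ultimately have "first_countable (subtopology X S)"
    using assms(2) by blast
  moreover have "p \<in> S"
    by (simp add: S_def)
  ultimately obtain V :: "nat \<Rightarrow> 'a set" where V: "\<And>m. openin X (V m)" "\<And>m. p \<in> V m"
    and V_base: "\<And>U. openin X U \<Longrightarrow> p \<in> U \<Longrightarrow> \<exists>m. S \<inter> V m \<subseteq> U"
    using \<open>S \<subseteq> topspace X\<close> by (rule first_countable_subtopology_nat_base) blast
  have z_S: "z n k \<in> S" for n k
    by (auto simp: S_def)
  show thesis
  proof (rule limitin_diagonal_sequence[OF V V_base y(1) z_lim z_S])
    fix k assume "limitin X (\<lambda>n. z n (k n)) p sequentially"
    with z_range show thesis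
      by (intro that) auto
  qed
qed

theorem mainTheorem20:
  fixes X :: "'a topology"
  assumes "t1_space X"
    and "frechet_space X"
    and "L_selective X"
    and "\<forall>S. S \<subseteq> topspace X \<and> countable S \<longrightarrow> first_countable (subtopology X S)"
  shows "strongly_L_selective X"
  unfolding strongly_L_selective_def strongly_selective_def
proof (intro allI impI)
  fix \<phi> assume lsc: "lsc_map omega_plus_one X \<phi>"
  then have \<phi>_values: "\<And>e. \<phi> e \<subseteq> topspace X \<and> \<phi> e \<noteq> {}"
    by (simp add: lsc_map_omega_plus_one)
  then obtain p where p: "p \<in> \<phi> \<infinity>"
    by blast
  obtain y where y: "\<And>n. y n \<in> X closure_of \<phi> (enat n)" "limitin X y p sequentially"
    using L_selective_limit_in_closures[OF assms(1,3) lsc p] by blast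
  obtain x where x: "\<And>n. x n \<in> \<phi> (enat n)" "limitin X x p sequentially"
    using frechet_limitin_from_closure_points[OF assms(2,4) y(2,1)] \<phi>_values by blast
  define f where "f e = (case e of enat n \<Rightarrow> x n | \<infinity> \<Rightarrow> p)" for e
  have "is_selection omega_plus_one \<phi> f"
    using x(1) p by (auto simp: is_selection_def f_def split: enat.split)
  moreover have "continuous_map omega_plus_one X f"
    using calculation \<phi>_values x(2)
    by (auto simp: continuous_map_omega_plus_one is_selection_def f_def)
  ultimately show "\<exists>f. continuous_map omega_plus_one X f \<and> is_selection omega_plus_one \<phi> f"
    by blast
qed

end
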